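(* Let $n\ge 1$ and $N\ge 1$ be integers, and let $Z_1,\dots,Z_n,Y_1,\dots,Y_N$ be independent identically distributed random variables with values in $[0,1]$ and mean $\mu$. Let $\overline Z=\frac1n\sum_{t=1}^n Z_t$ and $\overline X^{n+N}=\frac{n\overline Z+\sum_{t=1}^N Y_t}{n+N}$. Let $a\in\mathbb R$ be a constant and $d>0$. Then $$\Pr\!\left(\overline Z\le a-d\ \text{ and }\ \overline X^{n+N}\ge a\right)\le 2\exp\!\left(-\varphi\, d^2\, n\right)$$ and $$\Pr\!\left(\overline Z\ge a+d\ \text{ and }\ \overline X^{n+N}\le a\right)\le 2\exp\!\left(-\varphi\, d^2\, n\right),$$ where $$\varphi=\min_{r\ge 0}\,2\left(\frac{1+r}{1+\sqrt r}\right)^2=8(\sqrt2-1)^2>1.37 .$$ (In the application, for $i\ne\alpha$: $Z$ are the first $n=n_i$ samples of arm $i$, $a=\overline X_\alpha^{n_\alpha}$ and $d=\overline X_\alpha^{n_\alpha}-\overline X_i^{n_i}$; for arm $\alpha$: $n=n_\alpha$, $a=\overline X_\beta^{n_\beta}$ and $d=\overline X_\alpha^{n_\alpha}-\overline X_\beta^{n_\beta}$.)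
   Context: $\overline X_j^{n_j}$ denotes the sample mean of the first $n_j$ samples of arm $j$; $\alpha$ is the arm with the largest sample mean and $\beta$ the arm with the second largest. The quantity $\overline X^{n+N}$ is the sample mean of an arm after $N$ further samples beyond the first $n$. *)

theory Defs
  imports "HOL-Probability.Probability"
begin

text \<open>The constant varphi of the paper, defined as the infimum over r \<ge> 0
  (the theorem states that it is attained, i.e. a minimum).\<close>
definition varphi :: real where
  "varphi = (INF r\<in>{0..}. 2 * ((1 + r) / (1 + sqrt r))^2)"

end

theory Submission
  imports Defs
begin

(* Write S_Z = Z_1 + ... + Z_n and S_Y = Y_1 + ... + Y_N.  If the sample mean
   of the first n draws is at most a - d while the mean of all n + N draws is at least a,
   then S_Z lies below n*mu by n*s and S_Y lies above N*mu by N*t, for explicit s, t with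
   s + t = d (1 + n/N).  An elementary inequality (deviation_split) shows that then
   2 n s^2 or 2 N t^2 is at least varphi d^2 n, where varphi = 8 (sqrt 2 - 1)^2 is the
   minimum of 2 ((1 + r)/(1 + sqrt r))^2; Hoeffding's inequality for the corresponding
   block alone bounds the event by exp (- varphi d^2 n), even without the factor 2.
   The opposite crossing is the same statement for the negated variables. *)

lemma hoeffding_unit_interval:
  fixes X :: "'i \<Rightarrow> 'a \<Rightarrow> real" and m s :: real
  assumes P: "prob_space M" and fin: "finite I" and ne: "I \<noteq> {}"
    and ind: "prob_space.indep_vars M (\<lambda>_. borel) X I"
    and rng: "\<And>i x. i \<in> I \<Longrightarrow> x \<in> space M \<Longrightarrow> X i x \<in> {0..1}"
    and ex: "\<And>i. i \<in> I \<Longrightarrow> prob_space.expectation M (X i) = m"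
    and s: "s \<ge> 0"
  shows "measure M {x\<in>space M. (\<Sum>i\<in>I. X i x) \<ge> real (card I) * m + real (card I) * s}
           \<le> exp (- 2 * real (card I) * s\<^sup>2)"
    and "measure M {x\<in>space M. (\<Sum>i\<in>I. X i x) \<le> real (card I) * m - real (card I) * s}
           \<le> exp (- 2 * real (card I) * s\<^sup>2)"
proof -
  interpret prob_space M by (fact P)
  interpret H: Hoeffding_ineq M I X "\<lambda>_. 0" "\<lambda>_. 1" "\<Sum>i\<in>I. expectation (X i)"
    by unfold_locales (use fin ind rng in \<open>auto intro!: AE_I2\<close>)
  have k: "real (card I) > 0" using fin ne by (simp add: card_gt_0_iff)
  have e: "real (card I) * s \<ge> 0" using s by simp
  have mean: "(\<Sum>i\<in>I. expectation (X i)) = real (card I) * m" using ex by simp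
  have pos: "(\<Sum>i\<in>I. ((1::real) - 0)\<^sup>2) > 0" using k by simp
  have rate: "- 2 * (real (card I) * s)\<^sup>2 / (\<Sum>i\<in>I. ((1::real) - 0)\<^sup>2) = - 2 * real (card I) * s\<^sup>2"
    using k by (simp add: power2_eq_square)
  show "measure M {x\<in>space M. (\<Sum>i\<in>I. X i x) \<ge> real (card I) * m + real (card I) * s}
          \<le> exp (- 2 * real (card I) * s\<^sup>2)"
    using H.Hoeffding_ineq_ge[OF e pos] by (simp only: mean rate)
  show "measure M {x\<in>space M. (\<Sum>i\<in>I. X i x) \<le> real (card I) * m - real (card I) * s}
          \<le> exp (- 2 * real (card I) * s\<^sup>2)"
    using H.Hoeffding_ineq_le[OF e pos] by (simp only: mean rate)
qed

lemma sqrt2_minus_1_pos: "sqrt 2 - 1 > (0::real)"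
  by (simp add: real_less_rsqrt)

lemma sqrt2_minus_1_root: "(sqrt 2 - 1)^2 + 2 * (sqrt 2 - 1) = (1::real)"
  by (simp add: power2_eq_square algebra_simps)

text \<open>The tangent-line inequality behind varphi: 1 + u^2 - 2c(1 + u) = (u - c)^2.\<close>
lemma quadratic_tangent_bound:
  fixes u :: real
  shows "2 * (sqrt 2 - 1) * (1 + u) \<le> 1 + u^2"
proof -
  have "1 + u^2 - 2 * (sqrt 2 - 1) * (1 + u) = (u - (sqrt 2 - 1))^2"
    using sqrt2_minus_1_root by (simp add: power2_eq_square algebra_simps)
  then show ?thesis by (metis diff_ge_0_iff_ge zero_le_power2)
qed

lemma varphi_objective_lower:
  fixes r :: real assumes "r \<ge> 0"
  shows "8 * (sqrt 2 - 1)^2 \<le> 2 * ((1 + r) / (1 + sqrt r))^2"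
proof -
  have "2 * (sqrt 2 - 1) \<le> (1 + r) / (1 + sqrt r)"
    using quadratic_tangent_bound[of "sqrt r"] assms
    by (simp add: pos_le_divide_eq add_pos_nonneg)
  then have "(2 * (sqrt 2 - 1))^2 \<le> ((1 + r) / (1 + sqrt r))^2"
    using sqrt2_minus_1_pos by (intro power_mono) auto
  then show ?thesis by (simp only: power_mult_distrib) simp
qed

lemma varphi_objective_at_minimiser:
  "2 * ((1 + (sqrt 2 - 1)^2) / (1 + sqrt ((sqrt 2 - 1)^2)))^2 = 8 * (sqrt 2 - 1)^2"
proof -
  have root: "sqrt ((sqrt 2 - 1)^2) = sqrt 2 - 1" using sqrt2_minus_1_pos by simp
  have "1 + (sqrt 2 - 1)^2 = 2 * (sqrt 2 - 1) * (1 + (sqrt 2 - 1))"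
    using sqrt2_minus_1_root by (simp add: power2_eq_square algebra_simps)
  then have "(1 + (sqrt 2 - 1)^2) / (1 + sqrt ((sqrt 2 - 1)^2)) = 2 * (sqrt 2 - 1)"
    using root sqrt2_minus_1_pos by (simp add: add_pos_pos)
  then show ?thesis by (simp only: power_mult_distrib) simp
qed

lemma varphi_eq: "varphi = 8 * (sqrt 2 - 1)^2"
proof (rule antisym)
  show "varphi \<le> 8 * (sqrt 2 - 1)^2"
    unfolding varphi_def varphi_objective_at_minimiser[symmetric]
    by (rule cINF_lower) (auto intro!: bdd_belowI2[where m = 0])
  show "8 * (sqrt 2 - 1)^2 \<le> varphi"
    unfolding varphi_def
  proof (rule cINF_greatest)
    fix r :: real assume "r \<in> {0..}"
    then show "8 * (sqrt 2 - 1)^2 \<le> 2 * ((1 + r) / (1 + sqrt r))^2"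
      by (intro varphi_objective_lower) simp
  qed simp
qed

lemma varphi_attained: "\<exists>r\<ge>0. 2 * ((1 + r) / (1 + sqrt r))^2 = varphi"
  using varphi_objective_at_minimiser varphi_eq by (intro exI[of _ "(sqrt 2 - 1)^2"]) simp

lemma varphi_gt: "varphi > 1.37"
proof -
  have "sqrt 2 < sqrt (1.414375^2)"
    by (rule real_sqrt_less_mono) (simp add: power2_eq_square)
  then have "sqrt 2 < 1.414375" by simp
  then show ?thesis unfolding varphi_eq by (simp add: power2_eq_square algebra_simps)
qed

text \<open>With
  u = sqrt (n/N), either s \<ge> 2cd or t \<ge> 2cdu, since otherwise
  s + t < 2cd (1 + u) \<le> d (1 + u^2) = s + t.\<close>
lemma deviation_split:
  fixes n N d s t :: real
  assumes n: "n > 0" and N: "N > 0" and d: "d > 0" and st: "s + t = d * (1 + n / N)"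
  shows "(s \<ge> 0 \<and> varphi * d^2 * n \<le> 2 * n * s^2)
       \<or> (t \<ge> 0 \<and> varphi * d^2 * n \<le> 2 * N * t^2)"
proof -
  define c where "c = sqrt 2 - 1"
  define u where "u = sqrt (n / N)"
  have c: "c > 0" using sqrt2_minus_1_pos by (simp add: c_def)
  have u: "u \<ge> 0" "u^2 = n / N" using n N by (auto simp: u_def)
  have vp: "varphi = 8 * c^2" using varphi_eq by (simp add: c_def)
  have "d * (2 * c * (1 + u)) \<le> d * (1 + u^2)"
    using quadratic_tangent_bound[of u] d by (simp add: c_def)
  then have "s \<ge> 2 * c * d \<or> t \<ge> 2 * c * d * u"
    using st u by (auto simp: algebra_simps)
  then show ?thesis
  proof
    assume s: "s \<ge> 2 * c * d"
    then have "(2 * c * d)^2 \<le> s^2" using c d by (intro power_mono) auto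
    then have "varphi * d^2 * n \<le> 2 * n * s^2"
      using n by (simp add: vp power_mult_distrib)
    moreover have "0 \<le> 2 * c * d" using c d by simp
    ultimately show ?thesis using s by simp
  next
    assume t: "t \<ge> 2 * c * d * u"
    then have "(2 * c * d * u)^2 \<le> t^2" using c d u by (intro power_mono) auto
    then have "4 * c^2 * d^2 * (n / N) \<le> t^2" using u by (simp add: power_mult_distrib)
    then have "varphi * d^2 * n \<le> 2 * N * t^2" using N by (simp add: vp field_simps)
    moreover have "0 \<le> 2 * c * d * u" using c d u by simp
    ultimately show ?thesis using t by simp
  qed
qed

text \<open>Bound on the crossing event, for any two measurable sums S_Z (n terms) and S_Y
  (N terms) with the one-sided sub-Gaussian tails supplied by Hoeffding's inequality:
  the event is contained both in a lower-tail event of S_Z and in an upper-tail event of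
  S_Y, and deviation_split picks the one that is unlikely enough.\<close>
lemma crossing_event_bound:
  fixes SZ SY :: "'a \<Rightarrow> real" and n N \<mu> a d :: real
  assumes P: "prob_space M" and [measurable]: "SZ \<in> borel_measurable M" "SY \<in> borel_measurable M"
    and n: "n > 0" and N: "N > 0" and d: "d > 0"
    and tail_Z: "\<And>s. s \<ge> 0 \<Longrightarrow> measure M {x\<in>space M. SZ x \<le> n * \<mu> - n * s} \<le> exp (- 2 * n * s\<^sup>2)"
    and tail_Y: "\<And>t. t \<ge> 0 \<Longrightarrow> measure M {x\<in>space M. SY x \<ge> N * \<mu> + N * t} \<le> exp (- 2 * N * t\<^sup>2)"
  shows "measure M {x\<in>space M. SZ x / n \<le> a - d \<and> (SZ x + SY x) / (n + N) \<ge> a}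
           \<le> exp (- varphi * d^2 * n)"
proof -
  interpret prob_space M by (fact P)
  define E where "E = {x\<in>space M. SZ x / n \<le> a - d \<and> (SZ x + SY x) / (n + N) \<ge> a}"
  define s where "s = \<mu> - a + d"
  define t where "t = a - \<mu> + n * d / N"
  have st: "s + t = d * (1 + n / N)" using N by (simp add: s_def t_def field_simps)
  have E_Z: "E \<subseteq> {x\<in>space M. SZ x \<le> n * \<mu> - n * s}"
  proof safe
    fix x assume "x \<in> E"
    then have "SZ x \<le> n * (a - d)" using n by (simp add: E_def divide_le_eq mult.commute)
    then show "SZ x \<le> n * \<mu> - n * s" by (simp add: s_def algebra_simps)
  qed (simp add: E_def)
  have E_Y: "E \<subseteq> {x\<in>space M. SY x \<ge> N * \<mu> + N * t}"
  proof safe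
    fix x assume "x \<in> E"
    then have "SZ x \<le> n * (a - d)" "a * (n + N) \<le> SZ x + SY x"
      using n N by (simp_all add: E_def divide_le_eq le_divide_eq mult.commute)
    then have "N * a + n * d \<le> SY x" by (simp add: algebra_simps)
    then show "SY x \<ge> N * \<mu> + N * t" using N by (simp add: t_def algebra_simps)
  qed (simp add: E_def)
  from deviation_split[OF n N d st] have "measure M E \<le> exp (- varphi * d^2 * n)"
  proof
    assume s: "s \<ge> 0 \<and> varphi * d^2 * n \<le> 2 * n * s^2"
    have "measure M E \<le> measure M {x\<in>space M. SZ x \<le> n * \<mu> - n * s}"
      by (rule finite_measure_mono[OF E_Z]) measurable
    also have "\<dots> \<le> exp (- 2 * n * s\<^sup>2)" using s by (intro tail_Z) simp
    also have "\<dots> \<le> exp (- varphi * d^2 * n)" using s by simp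
    finally show ?thesis .
  next
    assume t: "t \<ge> 0 \<and> varphi * d^2 * n \<le> 2 * N * t^2"
    have "measure M E \<le> measure M {x\<in>space M. SY x \<ge> N * \<mu> + N * t}"
      by (rule finite_measure_mono[OF E_Y]) measurable
    also have "\<dots> \<le> exp (- 2 * N * t\<^sup>2)" using t by (intro tail_Y) simp
    also have "\<dots> \<le> exp (- varphi * d^2 * n)" using t by simp
    finally show ?thesis .
  qed
  then show ?thesis by (simp add: E_def)
qed

lemma crossing_event_bound_reflected:
  fixes SZ SY :: "'a \<Rightarrow> real" and n N \<mu> a d :: real
  assumes P: "prob_space M" and [measurable]: "SZ \<in> borel_measurable M" "SY \<in> borel_measurable M"
    and n: "n > 0" and N: "N > 0" and d: "d > 0"
    and tail_Z: "\<And>s. s \<ge> 0 \<Longrightarrow> measure M {x\<in>space M. SZ x \<ge> n * \<mu> + n * s} \<le> exp (- 2 * n * s\<^sup>2)"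
    and tail_Y: "\<And>t. t \<ge> 0 \<Longrightarrow> measure M {x\<in>space M. SY x \<le> N * \<mu> - N * t} \<le> exp (- 2 * N * t\<^sup>2)"
  shows "measure M {x\<in>space M. SZ x / n \<ge> a + d \<and> (SZ x + SY x) / (n + N) \<le> a}
           \<le> exp (- varphi * d^2 * n)"
proof -
  have neg: "(- u - v) / k = - ((u + v) / k)" for u v k :: real
    by (simp add: diff_divide_distrib add_divide_distrib)
  have "measure M {x\<in>space M. - SZ x / n \<le> - a - d \<and> (- SZ x + - SY x) / (n + N) \<ge> - a}
          \<le> exp (- varphi * d^2 * n)"
  proof (rule crossing_event_bound[OF P _ _ n N d, where \<mu> = "- \<mu>"])
    fix s :: real assume "s \<ge> 0"
    have "{x\<in>space M. - SZ x \<le> n * - \<mu> - n * s} = {x\<in>space M. SZ x \<ge> n * \<mu> + n * s}"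
      by auto
    then show "measure M {x\<in>space M. - SZ x \<le> n * - \<mu> - n * s} \<le> exp (- 2 * n * s\<^sup>2)"
      using tail_Z[OF \<open>s \<ge> 0\<close>] by simp
  next
    fix t :: real assume "t \<ge> 0"
    have "{x\<in>space M. - SY x \<ge> N * - \<mu> + N * t} = {x\<in>space M. SY x \<le> N * \<mu> - N * t}"
      by auto
    then show "measure M {x\<in>space M. - SY x \<ge> N * - \<mu> + N * t} \<le> exp (- 2 * N * t\<^sup>2)"
      using tail_Y[OF \<open>t \<ge> 0\<close>] by simp
  qed simp_all
  moreover have "{x\<in>space M. - SZ x / n \<le> - a - d \<and> (- SZ x + - SY x) / (n + N) \<ge> - a}
      = {x\<in>space M. SZ x / n \<ge> a + d \<and> (SZ x + SY x) / (n + N) \<le> a}"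
    by (auto simp: neg)
  ultimately show ?thesis by simp
qed

lemma first_block_tails:
  fixes Z Y :: "nat \<Rightarrow> 'a \<Rightarrow> real" and \<mu> s :: real
  assumes P: "prob_space M" and n: "n \<ge> 1"
    and indep: "prob_space.indep_vars M (\<lambda>_. borel)
                  (\<lambda>i. if i < n then Z i else Y (i - n)) {..<n+N}"
    and range_Z: "\<And>t x. t < n \<Longrightarrow> x \<in> space M \<Longrightarrow> Z t x \<in> {0..1}"
    and mean_Z: "\<And>t. t < n \<Longrightarrow> prob_space.expectation M (Z t) = \<mu>"
    and s: "s \<ge> 0"
  shows "measure M {x\<in>space M. (\<Sum>t<n. Z t x) \<ge> real n * \<mu> + real n * s} \<le> exp (- 2 * real n * s\<^sup>2)"
    and "measure M {x\<in>space M. (\<Sum>t<n. Z t x) \<le> real n * \<mu> - real n * s} \<le> exp (- 2 * real n * s\<^sup>2)"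
proof -
  define W where "W = (\<lambda>i. if i < n then Z i else Y (i - n))"
  have ind: "prob_space.indep_vars M (\<lambda>_. borel) W {..<n}"
    unfolding W_def by (rule prob_space.indep_vars_subset[OF P indep]) auto
  have sums: "(\<Sum>i<n. W i x) = (\<Sum>t<n. Z t x)" for x by (simp add: W_def)
  note H = hoeffding_unit_interval[OF P _ _ ind _ _ s, of \<mu>, unfolded sums card_lessThan]
  have ne: "{..<n} \<noteq> {}" using n by (auto simp: lessThan_empty_iff)
  show "measure M {x\<in>space M. (\<Sum>t<n. Z t x) \<ge> real n * \<mu> + real n * s} \<le> exp (- 2 * real n * s\<^sup>2)"
    by (rule H(1)) (use ne range_Z mean_Z in \<open>auto simp: W_def\<close>)
  show "measure M {x\<in>space M. (\<Sum>t<n. Z t x) \<le> real n * \<mu> - real n * s} \<le> exp (- 2 * real n * s\<^sup>2)"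
    by (rule H(2)) (use ne range_Z mean_Z in \<open>auto simp: W_def\<close>)
qed

lemma second_block_tails:
  fixes Z Y :: "nat \<Rightarrow> 'a \<Rightarrow> real" and \<mu> t :: real
  assumes P: "prob_space M" and N: "N \<ge> 1"
    and indep: "prob_space.indep_vars M (\<lambda>_. borel)
                  (\<lambda>i. if i < n then Z i else Y (i - n)) {..<n+N}"
    and range_Y: "\<And>t x. t < N \<Longrightarrow> x \<in> space M \<Longrightarrow> Y t x \<in> {0..1}"
    and mean_Y: "\<And>t. t < N \<Longrightarrow> prob_space.expectation M (Y t) = \<mu>"
    and t: "t \<ge> 0"
  shows "measure M {x\<in>space M. (\<Sum>j<N. Y j x) \<ge> real N * \<mu> + real N * t} \<le> exp (- 2 * real N * t\<^sup>2)"
    and "measure M {x\<in>space M. (\<Sum>j<N. Y j x) \<le> real N * \<mu> - real N * t} \<le> exp (- 2 * real N * t\<^sup>2)"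
proof -
  define W where "W = (\<lambda>i. if i < n then Z i else Y (i - n))"
  have ind: "prob_space.indep_vars M (\<lambda>_. borel) W {n..<n+N}"
    unfolding W_def by (rule prob_space.indep_vars_subset[OF P indep]) auto
  have sums: "(\<Sum>i\<in>{n..<n+N}. W i x) = (\<Sum>j<N. Y j x)" for x
  proof -
    have "(\<Sum>i\<in>{n..<n+N}. W i x) = (\<Sum>i\<in>{0+n..<N+n}. W i x)" by (simp add: add.commute)
    also have "\<dots> = (\<Sum>j\<in>{0..<N}. W (j + n) x)" by (rule sum.shift_bounds_nat_ivl)
    finally show ?thesis by (simp add: W_def atLeast0LessThan)
  qed
  have card: "card {n..<n+N} = N" by simp
  note H = hoeffding_unit_interval[OF P _ _ ind _ _ t, of \<mu>, unfolded sums card]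
  have ne: "{n..<n+N} \<noteq> {}" using N by auto
  have rng: "W i x \<in> {0..1}" if "i \<in> {n..<n+N}" "x \<in> space M" for i x
    using that range_Y[of "i - n" x] by (auto simp: W_def)
  have mean: "prob_space.expectation M (W i) = \<mu>" if "i \<in> {n..<n+N}" for i
    using that mean_Y[of "i - n"] by (auto simp: W_def)
  show "measure M {x\<in>space M. (\<Sum>j<N. Y j x) \<ge> real N * \<mu> + real N * t} \<le> exp (- 2 * real N * t\<^sup>2)"
    by (rule H(1)) (use ne rng mean in auto)
  show "measure M {x\<in>space M. (\<Sum>j<N. Y j x) \<le> real N * \<mu> - real N * t} \<le> exp (- 2 * real N * t\<^sup>2)"
    by (rule H(2)) (use ne rng mean in auto)
qed

theorem mainTheorem2:
  fixes M :: "'a measure" and Z Y :: "nat \<Rightarrow> 'a \<Rightarrow> real"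
    and n N :: nat and \<mu> a d :: real
  assumes "prob_space M"
    and "n \<ge> 1" and "N \<ge> 1"
    and indep: "prob_space.indep_vars M (\<lambda>_. borel)
                  (\<lambda>i. if i < n then Z i else Y (i - n)) {..<n+N}"
    and rv_Z: "\<And>t. t < n \<Longrightarrow> Z t \<in> borel_measurable M"
    and rv_Y: "\<And>t. t < N \<Longrightarrow> Y t \<in> borel_measurable M"
    and ident_Z: "\<And>t. t < n \<Longrightarrow> distr M borel (Z t) = distr M borel (Z 0)"
    and ident_Y: "\<And>t. t < N \<Longrightarrow> distr M borel (Y t) = distr M borel (Z 0)"
    and range_Z: "\<And>t x. t < n \<Longrightarrow> x \<in> space M \<Longrightarrow> Z t x \<in> {0..1}"
    and range_Y: "\<And>t x. t < N \<Longrightarrow> x \<in> space M \<Longrightarrow> Y t x \<in> {0..1}"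
    and mean_Z: "\<And>t. t < n \<Longrightarrow> prob_space.expectation M (Z t) = \<mu>"
    and mean_Y: "\<And>t. t < N \<Longrightarrow> prob_space.expectation M (Y t) = \<mu>"
    and "d > 0"
  defines "Zbar \<equiv> (\<lambda>x. (\<Sum>t<n. Z t x) / real n)"
    and "Xbar \<equiv> (\<lambda>x. (real n * ((\<Sum>t<n. Z t x) / real n) + (\<Sum>t<N. Y t x)) / (real n + real N))"
  shows "measure M {x \<in> space M. Zbar x \<le> a - d \<and> Xbar x \<ge> a}
           \<le> 2 * exp (- varphi * d^2 * real n)
         \<and> measure M {x \<in> space M. Zbar x \<ge> a + d \<and> Xbar x \<le> a}
           \<le> 2 * exp (- varphi * d^2 * real n)
         \<and> (\<exists>r\<ge>0. 2 * ((1 + r) / (1 + sqrt r))^2 = varphi)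
         \<and> varphi = 8 * (sqrt 2 - 1)^2
         \<and> varphi > 1.37"
proof -
  define SZ where "SZ x = (\<Sum>t<n. Z t x)" for x
  define SY where "SY x = (\<Sum>t<N. Y t x)" for x
  have n: "real n > 0" and N: "real N > 0" using assms(2,3) by auto
  have meas: "SZ \<in> borel_measurable M" "SY \<in> borel_measurable M"
    unfolding SZ_def SY_def using rv_Z rv_Y by (auto intro!: borel_measurable_sum)
  have means: "Zbar = (\<lambda>x. SZ x / real n)" "Xbar = (\<lambda>x. (SZ x + SY x) / (real n + real N))"
    unfolding Zbar_def Xbar_def SZ_def SY_def using n by simp_all
  note tails_Z = first_block_tails[OF assms(1,2) indep range_Z mean_Z, folded SZ_def]
  note tails_Y = second_block_tails[OF assms(1,3) indep range_Y mean_Y, folded SY_def]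
  have "measure M {x \<in> space M. Zbar x \<le> a - d \<and> Xbar x \<ge> a} \<le> exp (- varphi * d^2 * real n)"
    unfolding means by (rule crossing_event_bound[OF assms(1) meas n N \<open>d > 0\<close> tails_Z(2) tails_Y(1)])
  moreover have "measure M {x \<in> space M. Zbar x \<ge> a + d \<and> Xbar x \<le> a} \<le> exp (- varphi * d^2 * real n)"
    unfolding means
    by (rule crossing_event_bound_reflected[OF assms(1) meas n N \<open>d > 0\<close> tails_Z(1) tails_Y(2)])
  moreover have "exp (- varphi * d^2 * real n) \<le> 2 * exp (- varphi * d^2 * real n)" by simp
  ultimately show ?thesis using varphi_attained varphi_eq varphi_gt by (blast intro: order_trans)
qed

end
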